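(* Let $S$ be a semigroup. Then $S^0$ is finitely right equated if and only if $S$ is finitely right equated and $S=US^1$ for some finite set $U\subseteq S$.
   Context: $S^0$ is $S$ if $S$ has a zero and otherwise $S$ with a zero adjoined; $S^1$ is $S$ if $S$ is a monoid and otherwise $S$ with an identity adjoined. For $a\in S$, $\mathbf{r}_S(a)=\{(s,t)\in S\times S\mid as=at\}$; $S$ is finitely right equated if each $\mathbf{r}_S(a)$ is finitely generated as a right congruence. *)

theory Defs
  imports Main
begin

definition semigroup_on :: "'a set \<Rightarrow> ('a \<Rightarrow> 'a \<Rightarrow> 'a) \<Rightarrow> bool" where
  "semigroup_on S f \<longleftrightarrow>
     (\<forall>x\<in>S. \<forall>y\<in>S. f x y \<in> S) \<and>
     (\<forall>x\<in>S. \<forall>y\<in>S. \<forall>z\<in>S. f (f x y) z = f x (f y z))"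

definition right_congruence :: "'a set \<Rightarrow> ('a \<Rightarrow> 'a \<Rightarrow> 'a) \<Rightarrow> ('a \<times> 'a) set \<Rightarrow> bool" where
  "right_congruence S f \<rho> \<longleftrightarrow>
     equiv S \<rho> \<and> (\<forall>s t u. (s, t) \<in> \<rho> \<and> u \<in> S \<longrightarrow> (f s u, f t u) \<in> \<rho>)"

definition rcong_gen :: "'a set \<Rightarrow> ('a \<Rightarrow> 'a \<Rightarrow> 'a) \<Rightarrow> ('a \<times> 'a) set \<Rightarrow> ('a \<times> 'a) set" where
  "rcong_gen S f X = \<Inter> {\<rho>. right_congruence S f \<rho> \<and> X \<subseteq> \<rho>}"

definition fg_right_congruence :: "'a set \<Rightarrow> ('a \<Rightarrow> 'a \<Rightarrow> 'a) \<Rightarrow> ('a \<times> 'a) set \<Rightarrow> bool" where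
  "fg_right_congruence S f \<rho> \<longleftrightarrow>
     right_congruence S f \<rho> \<and> (\<exists>X. finite X \<and> X \<subseteq> S \<times> S \<and> \<rho> = rcong_gen S f X)"

definition rann :: "'a set \<Rightarrow> ('a \<Rightarrow> 'a \<Rightarrow> 'a) \<Rightarrow> 'a \<Rightarrow> ('a \<times> 'a) set" where
  "rann S f a = {(s, t). s \<in> S \<and> t \<in> S \<and> f a s = f a t}"

definition fin_right_equated :: "'a set \<Rightarrow> ('a \<Rightarrow> 'a \<Rightarrow> 'a) \<Rightarrow> bool" where
  "fin_right_equated S f \<longleftrightarrow> (\<forall>a\<in>S. fg_right_congruence S f (rann S f a))"

definition has_zero :: "'a set \<Rightarrow> ('a \<Rightarrow> 'a \<Rightarrow> 'a) \<Rightarrow> bool" where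
  "has_zero S f \<longleftrightarrow> (\<exists>z\<in>S. \<forall>s\<in>S. f z s = z \<and> f s z = z)"

text \<open>S^0, realised on the type 'a option: if S has a zero it is (a copy of) S itself,
otherwise None is the adjoined zero.\<close>
definition zero_adj_carrier :: "'a set \<Rightarrow> ('a \<Rightarrow> 'a \<Rightarrow> 'a) \<Rightarrow> 'a option set" where
  "zero_adj_carrier S f = (if has_zero S f then Some ` S else insert None (Some ` S))"

fun zero_adj_mult :: "('a \<Rightarrow> 'a \<Rightarrow> 'a) \<Rightarrow> 'a option \<Rightarrow> 'a option \<Rightarrow> 'a option" where
  "zero_adj_mult f (Some x) (Some y) = Some (f x y)"
| "zero_adj_mult f _ _ = None"

text \<open>The set U S^1 = U \<union> U S (u\<cdot>1 = u).\<close>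
definition right_ideal_gen :: "'a set \<Rightarrow> ('a \<Rightarrow> 'a \<Rightarrow> 'a) \<Rightarrow> 'a set \<Rightarrow> 'a set" where
  "right_ideal_gen S f U = U \<union> {f u s | u s. u \<in> U \<and> s \<in> S}"

end

theory Submission
  imports Defs
begin

text \<open>The annihilator congruence of a zero z is universal, since z s = z = z t. The universal right
congruence of a semigroup S is finitely generated exactly when S = U S^1 for a finite U: the
entries of a finite generating set X give such a U, because "equal, or both in U S^1" is a right
congruence containing X; conversely, if z is a left zero, the pairs (z, u) with u \<in> U generate it,
as (z, u c) = (z c, u c). Hence S^0 is finitely right equated iff the annihilators of the elements
of S are finitely generated in S^0 and S^0 = U (S^0)^1 for a finite U; the latter transfers to S.
The annihilator in S^0 of a \<in> S is that in S with the adjoined zero (if any) as a singleton class,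
and such a class never needs generators, so finite generation is the same in S and S^0.\<close>

lemma semigroup_on_closed: "semigroup_on S f \<Longrightarrow> x \<in> S \<Longrightarrow> y \<in> S \<Longrightarrow> f x y \<in> S"
  unfolding semigroup_on_def by blast

lemma semigroup_on_assoc:
  "semigroup_on S f \<Longrightarrow> x \<in> S \<Longrightarrow> y \<in> S \<Longrightarrow> z \<in> S \<Longrightarrow> f (f x y) z = f x (f y z)"
  unfolding semigroup_on_def by blast

subsection \<open>Right congruences\<close>

lemma right_congruenceI:
  assumes "\<rho> \<subseteq> S \<times> S" and "\<And>x. x \<in> S \<Longrightarrow> (x, x) \<in> \<rho>"
    and "\<And>x y. (x, y) \<in> \<rho> \<Longrightarrow> (y, x) \<in> \<rho>"
    and "\<And>x y z. (x, y) \<in> \<rho> \<Longrightarrow> (y, z) \<in> \<rho> \<Longrightarrow> (x, z) \<in> \<rho>"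
    and "\<And>s t u. (s, t) \<in> \<rho> \<Longrightarrow> u \<in> S \<Longrightarrow> (f s u, f t u) \<in> \<rho>"
  shows "right_congruence S f \<rho>"
  using assms unfolding right_congruence_def equiv_def refl_on_def sym_def trans_def by blast

lemma right_congruence_subset: "right_congruence S f \<rho> \<Longrightarrow> \<rho> \<subseteq> S \<times> S"
  unfolding right_congruence_def equiv_def refl_on_def by blast

lemma right_congruence_refl: "right_congruence S f \<rho> \<Longrightarrow> x \<in> S \<Longrightarrow> (x, x) \<in> \<rho>"
  unfolding right_congruence_def equiv_def refl_on_def by blast

lemma right_congruence_sym: "right_congruence S f \<rho> \<Longrightarrow> (x, y) \<in> \<rho> \<Longrightarrow> (y, x) \<in> \<rho>"
  unfolding right_congruence_def equiv_def sym_def by blast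

lemma right_congruence_trans:
  "right_congruence S f \<rho> \<Longrightarrow> (x, y) \<in> \<rho> \<Longrightarrow> (y, z) \<in> \<rho> \<Longrightarrow> (x, z) \<in> \<rho>"
  unfolding right_congruence_def equiv_def trans_def by blast

lemma right_congruence_right_mult:
  "right_congruence S f \<rho> \<Longrightarrow> (s, t) \<in> \<rho> \<Longrightarrow> u \<in> S \<Longrightarrow> (f s u, f t u) \<in> \<rho>"
  unfolding right_congruence_def by blast

lemma right_congruence_Inter:
  assumes "F \<noteq> {}" and "\<And>\<rho>. \<rho> \<in> F \<Longrightarrow> right_congruence S f \<rho>"
  shows "right_congruence S f (\<Inter> F)"
proof (rule right_congruenceI)
  show "\<Inter> F \<subseteq> S \<times> S"
    using assms by (blast dest: right_congruence_subset)
qed (use assms in \<open>blast dest: right_congruence_refl right_congruence_sym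
      right_congruence_trans right_congruence_right_mult\<close>)+

lemma right_congruence_universal: "semigroup_on S f \<Longrightarrow> right_congruence S f (S \<times> S)"
  by (rule right_congruenceI) (auto simp: semigroup_on_closed)

lemma rcong_gen_right_congruence:
  assumes "semigroup_on S f" and "X \<subseteq> S \<times> S"
  shows "right_congruence S f (rcong_gen S f X)"
  unfolding rcong_gen_def
  using assms right_congruence_universal by (intro right_congruence_Inter) auto

lemma rcong_gen_superset: "X \<subseteq> rcong_gen S f X"
  unfolding rcong_gen_def by blast

lemma rcong_gen_least: "right_congruence S f \<rho> \<Longrightarrow> X \<subseteq> \<rho> \<Longrightarrow> rcong_gen S f X \<subseteq> \<rho>"
  unfolding rcong_gen_def by blast

lemma rcong_gen_absorb_Id_on:
  assumes "Y \<subseteq> X" and "X \<subseteq> Y \<union> Id_on S"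
  shows "rcong_gen S f X = rcong_gen S f Y"
proof -
  have "X \<subseteq> \<rho> \<longleftrightarrow> Y \<subseteq> \<rho>" if "right_congruence S f \<rho>" for \<rho>
    using assms right_congruence_refl[OF that] by (auto simp: Id_on_def)
  then show ?thesis
    unfolding rcong_gen_def by (metis (lifting))
qed

lemma fg_right_congruenceI:
  "semigroup_on S f \<Longrightarrow> finite X \<Longrightarrow> X \<subseteq> S \<times> S \<Longrightarrow> \<rho> = rcong_gen S f X
    \<Longrightarrow> fg_right_congruence S f \<rho>"
  unfolding fg_right_congruence_def using rcong_gen_right_congruence by blast

lemma fg_right_congruenceE:
  assumes "fg_right_congruence S f \<rho>"
  obtains X where "finite X" "X \<subseteq> S \<times> S" "\<rho> = rcong_gen S f X"
  using assms unfolding fg_right_congruence_def by blast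

lemma rann_left_zero: "z \<in> S \<Longrightarrow> \<forall>s\<in>S. f z s = z \<Longrightarrow> rann S f z = S \<times> S"
  unfolding rann_def by auto

subsection \<open>Finitely generated right ideals\<close>

definition fin_gen_right_ideal :: "'a set \<Rightarrow> ('a \<Rightarrow> 'a \<Rightarrow> 'a) \<Rightarrow> bool" where
  "fin_gen_right_ideal S f \<longleftrightarrow> (\<exists>U. finite U \<and> U \<subseteq> S \<and> S = right_ideal_gen S f U)"

lemma generators_subset_right_ideal_gen: "U \<subseteq> right_ideal_gen S f U"
  unfolding right_ideal_gen_def by blast

lemma right_ideal_gen_subset: "semigroup_on S f \<Longrightarrow> U \<subseteq> S \<Longrightarrow> right_ideal_gen S f U \<subseteq> S"
  unfolding right_ideal_gen_def by (auto simp: semigroup_on_closed)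

lemma right_ideal_gen_right_mult:
  assumes sg: "semigroup_on S f" and "U \<subseteq> S" and x: "x \<in> right_ideal_gen S f U" and "u \<in> S"
  shows "f x u \<in> right_ideal_gen S f U"
  using x unfolding right_ideal_gen_def
proof (elim UnE CollectE exE conjE)
  fix v w assume "x = f v w" "v \<in> U" "w \<in> S"
  then have "f x u = f v (f w u)" and "f w u \<in> S"
    using assms by (auto simp: semigroup_on_assoc semigroup_on_closed)
  with \<open>v \<in> U\<close> show "f x u \<in> U \<union> {f u s |u s. u \<in> U \<and> s \<in> S}"
    by blast
qed (use \<open>u \<in> S\<close> in blast)

lemma fg_universal_imp_fin_gen_right_ideal:
  assumes sg: "semigroup_on S f" and fg: "fg_right_congruence S f (S \<times> S)"
  shows "fin_gen_right_ideal S f"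
proof (cases "S = {}")
  case True
  then show ?thesis unfolding fin_gen_right_ideal_def right_ideal_gen_def by auto
next
  case False
  then obtain z where z: "z \<in> S" by blast
  obtain X where X: "finite X" "X \<subseteq> S \<times> S" "S \<times> S = rcong_gen S f X"
    using fg by (rule fg_right_congruenceE)
  define U where "U = insert z (fst ` X \<union> snd ` X)"
  have "finite U"
    using X(1) by (simp add: U_def)
  moreover have "U \<subseteq> S"
    using X(2) z unfolding U_def by force
  ultimately have U: "finite U" "U \<subseteq> S" .
  define T where "T = right_ideal_gen S f U"
  have "z \<in> T"
    using generators_subset_right_ideal_gen[of U S f] unfolding T_def U_def by blast
  define \<rho> where "\<rho> = {(x, y). x \<in> S \<and> y \<in> S \<and> (x = y \<or> x \<in> T \<and> y \<in> T)}"
  have "right_congruence S f \<rho>"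
  proof (rule right_congruenceI)
    fix s t u assume "(s, t) \<in> \<rho>" "u \<in> S"
    then show "(f s u, f t u) \<in> \<rho>"
      using right_ideal_gen_right_mult[OF sg U(2), of _ u] semigroup_on_closed[OF sg, of _ u]
      unfolding \<rho>_def T_def by auto
  qed (auto simp: \<rho>_def)
  moreover have "X \<subseteq> \<rho>"
  proof -
    have "X \<subseteq> U \<times> U"
      unfolding U_def by (force intro: rev_image_eqI)
    moreover have "U \<times> U \<subseteq> \<rho>"
      using U(2) generators_subset_right_ideal_gen[of U S f] unfolding \<rho>_def T_def by blast
    ultimately show ?thesis by blast
  qed
  ultimately have "S \<times> S \<subseteq> \<rho>"
    unfolding X(3) by (rule rcong_gen_least)
  then have "S \<subseteq> T"
    using z \<open>z \<in> T\<close> unfolding \<rho>_def by blast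
  then show ?thesis
    using U right_ideal_gen_subset[OF sg U(2)]
    unfolding fin_gen_right_ideal_def T_def by blast
qed

lemma fin_gen_right_ideal_imp_fg_universal:
  assumes sg: "semigroup_on S f" and z: "z \<in> S" "\<forall>s\<in>S. f z s = z"
    and fin: "fin_gen_right_ideal S f"
  shows "fg_right_congruence S f (S \<times> S)"
proof -
  obtain U where U: "finite U" "U \<subseteq> S" "S = right_ideal_gen S f U"
    using fin unfolding fin_gen_right_ideal_def by blast
  define X where "X = (\<lambda>u. (z, u)) ` U"
  have X: "finite X" "X \<subseteq> S \<times> S"
    using U(1,2) z(1) unfolding X_def by auto
  let ?L = "rcong_gen S f X"
  have L: "right_congruence S f ?L"
    using sg X(2) by (rule rcong_gen_right_congruence)
  have z_rel: "(z, s) \<in> ?L" if "s \<in> S" for s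
  proof -
    have gen: "(z, u) \<in> ?L" if "u \<in> U" for u
      using that rcong_gen_superset[of X S f] unfolding X_def by blast
    from \<open>s \<in> S\<close> U(3) consider "s \<in> U" | u c where "u \<in> U" "c \<in> S" "s = f u c"
      unfolding right_ideal_gen_def by blast
    then show ?thesis
    proof cases
      case 2
      then have "(f z c, f u c) \<in> ?L"
        using gen by (intro right_congruence_right_mult[OF L])
      then show ?thesis using 2 z by simp
    qed (rule gen)
  qed
  have "S \<times> S \<subseteq> ?L"
  proof (intro subsetI, elim SigmaE)
    fix p x y assume "x \<in> S" "y \<in> S" "p = (x, y)"
    then show "p \<in> ?L"
      using z_rel right_congruence_sym[OF L] right_congruence_trans[OF L] by metis
  qed
  then have "S \<times> S = ?L"
    using right_congruence_subset[OF L] by blast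
  then show ?thesis
    using sg X by (rule fg_right_congruenceI[rotated 3])
qed

subsection \<open>Adjoining a zero\<close>

lemma Some_in_zero_adj_carrier_iff [simp]: "Some a \<in> zero_adj_carrier S f \<longleftrightarrow> a \<in> S"
  unfolding zero_adj_carrier_def by auto

lemma zero_adj_carrier_cases:
  assumes "x \<in> zero_adj_carrier S f"
  obtains "x = None" | a where "a \<in> S" "x = Some a"
  using assms by (cases x) auto

lemma semigroup_on_zero_adj:
  assumes sg: "semigroup_on S f"
  shows "semigroup_on (zero_adj_carrier S f) (zero_adj_mult f)"
  unfolding semigroup_on_def
proof (intro conjI ballI)
  fix x y z
  assume "x \<in> zero_adj_carrier S f" "y \<in> zero_adj_carrier S f"
  then show "zero_adj_mult f x y \<in> zero_adj_carrier S f"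
    by (cases x; cases y) (auto simp: semigroup_on_closed[OF sg])
  assume "z \<in> zero_adj_carrier S f"
  with \<open>x \<in> _\<close> \<open>y \<in> _\<close> show
    "zero_adj_mult f (zero_adj_mult f x y) z = zero_adj_mult f x (zero_adj_mult f y z)"
    by (cases x; cases y; cases z) (auto simp: semigroup_on_assoc[OF sg])
qed

lemma has_zero_zero_adj: "has_zero (zero_adj_carrier S f) (zero_adj_mult f)"
proof (cases "has_zero S f")
  case True
  then obtain z where "z \<in> S" "\<forall>s\<in>S. f z s = z \<and> f s z = z"
    unfolding has_zero_def by blast
  with True show ?thesis
    unfolding has_zero_def zero_adj_carrier_def by (intro bexI[of _ "Some z"]) auto
next
  case False
  have "zero_adj_mult f x None = None" for x
    by (cases x) auto
  with False show ?thesis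
    unfolding has_zero_def zero_adj_carrier_def by (intro bexI[of _ None]) auto
qed

definition zero_adj_rel :: "'a set \<Rightarrow> ('a \<Rightarrow> 'a \<Rightarrow> 'a) \<Rightarrow> ('a \<times> 'a) set \<Rightarrow> ('a option \<times> 'a option) set"
  where "zero_adj_rel S f \<rho> = map_prod Some Some ` \<rho> \<union> Id_on (zero_adj_carrier S f - Some ` S)"

lemma mem_zero_adj_rel_iff:
  "(x, y) \<in> zero_adj_rel S f \<rho> \<longleftrightarrow>
    (\<exists>a b. x = Some a \<and> y = Some b \<and> (a, b) \<in> \<rho>) \<or>
    (x = None \<and> y = None \<and> None \<in> zero_adj_carrier S f)"
  unfolding zero_adj_rel_def by (cases x; cases y) (auto simp: Id_on_def)

lemma Some_pair_in_zero_adj_rel_iff [simp]: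
  "(Some a, Some b) \<in> zero_adj_rel S f \<rho> \<longleftrightarrow> (a, b) \<in> \<rho>"
  by (simp add: mem_zero_adj_rel_iff)

lemma zero_adj_rel_inject: "zero_adj_rel S f \<rho> = zero_adj_rel S f \<sigma> \<Longrightarrow> \<rho> = \<sigma>"
  by (metis Some_pair_in_zero_adj_rel_iff pred_equals_eq2)

lemma right_congruence_zero_adj_rel:
  assumes \<rho>: "right_congruence S f \<rho>"
  shows "right_congruence (zero_adj_carrier S f) (zero_adj_mult f) (zero_adj_rel S f \<rho>)"
proof (rule right_congruenceI)
  show "zero_adj_rel S f \<rho> \<subseteq> zero_adj_carrier S f \<times> zero_adj_carrier S f"
    using right_congruence_subset[OF \<rho>] unfolding zero_adj_rel_def Id_on_def by auto
next
  fix x assume "x \<in> zero_adj_carrier S f"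
  then show "(x, x) \<in> zero_adj_rel S f \<rho>"
    by (cases x) (auto simp: mem_zero_adj_rel_iff intro: right_congruence_refl[OF \<rho>])
next
  fix x y assume "(x, y) \<in> zero_adj_rel S f \<rho>"
  then show "(y, x) \<in> zero_adj_rel S f \<rho>"
    unfolding mem_zero_adj_rel_iff using right_congruence_sym[OF \<rho>] by blast
next
  fix x y z assume "(x, y) \<in> zero_adj_rel S f \<rho>" "(y, z) \<in> zero_adj_rel S f \<rho>"
  then show "(x, z) \<in> zero_adj_rel S f \<rho>"
    unfolding mem_zero_adj_rel_iff using right_congruence_trans[OF \<rho>] by blast
next
  fix s t u
  assume "(s, t) \<in> zero_adj_rel S f \<rho>" "u \<in> zero_adj_carrier S f"
  then show "(zero_adj_mult f s u, zero_adj_mult f t u) \<in> zero_adj_rel S f \<rho>"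
    by (cases u) (auto simp: mem_zero_adj_rel_iff intro: right_congruence_right_mult[OF \<rho>])
qed

lemma right_congruence_Some_vimage:
  assumes \<rho>: "right_congruence (zero_adj_carrier S f) (zero_adj_mult f) \<rho>"
  shows "right_congruence S f (map_prod Some Some -` \<rho>)"
proof (rule right_congruenceI)
  show "map_prod Some Some -` \<rho> \<subseteq> S \<times> S"
    using right_congruence_subset[OF \<rho>] by auto
next
  fix x assume "x \<in> S"
  then show "(x, x) \<in> map_prod Some Some -` \<rho>"
    using right_congruence_refl[OF \<rho>, of "Some x"] by simp
next
  fix x y assume "(x, y) \<in> map_prod Some Some -` \<rho>"
  then show "(y, x) \<in> map_prod Some Some -` \<rho>"
    using right_congruence_sym[OF \<rho>] by simp
next
  fix x y z assume "(x, y) \<in> map_prod Some Some -` \<rho>" "(y, z) \<in> map_prod Some Some -` \<rho>"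
  then show "(x, z) \<in> map_prod Some Some -` \<rho>"
    using right_congruence_trans[OF \<rho>, of "Some x" "Some y" "Some z"] by simp
next
  fix s t u
  assume "(s, t) \<in> map_prod Some Some -` \<rho>" "u \<in> S"
  then show "(f s u, f t u) \<in> map_prod Some Some -` \<rho>"
    using right_congruence_right_mult[OF \<rho>, of "Some s" "Some t" "Some u"] by simp
qed

lemma rcong_gen_zero_adj:
  assumes sg: "semigroup_on S f" and X: "X \<subseteq> S \<times> S"
  shows "rcong_gen (zero_adj_carrier S f) (zero_adj_mult f) (map_prod Some Some ` X)
    = zero_adj_rel S f (rcong_gen S f X)" (is "?L = ?R")
proof
  show "?L \<subseteq> ?R"
    using rcong_gen_superset[of X S f]
    by (intro rcong_gen_least right_congruence_zero_adj_rel rcong_gen_right_congruence sg X)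
      (auto simp: zero_adj_rel_def)
  have L: "right_congruence (zero_adj_carrier S f) (zero_adj_mult f) ?L"
    using X by (intro rcong_gen_right_congruence semigroup_on_zero_adj sg) auto
  have "rcong_gen S f X \<subseteq> map_prod Some Some -` ?L"
    using rcong_gen_superset
    by (intro rcong_gen_least right_congruence_Some_vimage L) fastforce
  then show "?R \<subseteq> ?L"
    using right_congruence_refl[OF L] unfolding zero_adj_rel_def Id_on_def by auto
qed

lemma rann_zero_adj:
  assumes "a \<in> S"
  shows "rann (zero_adj_carrier S f) (zero_adj_mult f) (Some a) = zero_adj_rel S f (rann S f a)"
proof -
  have "(x, y) \<in> rann (zero_adj_carrier S f) (zero_adj_mult f) (Some a)
      \<longleftrightarrow> (x, y) \<in> zero_adj_rel S f (rann S f a)" for x y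
    by (cases x; cases y) (auto simp: rann_def mem_zero_adj_rel_iff)
  then show ?thesis by auto
qed

lemma fg_rann_zero_adj_iff:
  assumes sg: "semigroup_on S f" and a: "a \<in> S"
  shows "fg_right_congruence (zero_adj_carrier S f) (zero_adj_mult f)
      (rann (zero_adj_carrier S f) (zero_adj_mult f) (Some a))
    \<longleftrightarrow> fg_right_congruence S f (rann S f a)"
proof
  let ?S0 = "zero_adj_carrier S f" and ?f0 = "zero_adj_mult f"
  assume "fg_right_congruence ?S0 ?f0 (rann ?S0 ?f0 (Some a))"
  then obtain X0 where X0: "finite X0" "X0 \<subseteq> ?S0 \<times> ?S0" "rann ?S0 ?f0 (Some a) = rcong_gen ?S0 ?f0 X0"
    by (rule fg_right_congruenceE)
  define X where "X = map_prod Some Some -` X0"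
  have "finite X"
    unfolding X_def using X0(1) by (rule finite_vimageI) (simp add: prod.inj_map)
  moreover have "X \<subseteq> S \<times> S"
    unfolding X_def using X0(2) by (auto dest!: subsetD)
  ultimately have X: "finite X" "X \<subseteq> S \<times> S" .
  \<comment> \<open>every generator not between elements of S is a diagonal pair at the adjoined zero\<close>
  have X0_rann: "X0 \<subseteq> zero_adj_rel S f (rann S f a)"
    using rcong_gen_superset[of X0] X0(3) rann_zero_adj[OF a] by blast
  have "X0 \<subseteq> map_prod Some Some ` X \<union> Id_on ?S0"
  proof
    fix p assume "p \<in> X0"
    with X0_rann have "p \<in> zero_adj_rel S f (rann S f a)" by blast
    then consider b c where "p = (Some b, Some c)" | "p = (None, None)" "None \<in> ?S0"
      by (cases p) (auto simp: mem_zero_adj_rel_iff)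
    then show "p \<in> map_prod Some Some ` X \<union> Id_on ?S0"
    proof cases
      case (1 b c)
      with \<open>p \<in> X0\<close> have "(b, c) \<in> X"
        unfolding X_def by simp
      with 1 show ?thesis by (simp add: rev_image_eqI)
    qed (simp add: Id_on_def)
  qed
  then have "rcong_gen ?S0 ?f0 X0 = rcong_gen ?S0 ?f0 (map_prod Some Some ` X)"
    by (intro rcong_gen_absorb_Id_on) (simp_all add: X_def image_vimage_subset)
  then have "zero_adj_rel S f (rann S f a) = zero_adj_rel S f (rcong_gen S f X)"
    using X0(3) rann_zero_adj[OF a] rcong_gen_zero_adj[OF sg X(2)] by simp
  then show "fg_right_congruence S f (rann S f a)"
    by (rule fg_right_congruenceI[OF sg X zero_adj_rel_inject])
next
  assume "fg_right_congruence S f (rann S f a)"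
  then obtain X where X: "finite X" "X \<subseteq> S \<times> S" "rann S f a = rcong_gen S f X"
    by (rule fg_right_congruenceE)
  then have "rann (zero_adj_carrier S f) (zero_adj_mult f) (Some a)
      = rcong_gen (zero_adj_carrier S f) (zero_adj_mult f) (map_prod Some Some ` X)"
    by (simp add: rann_zero_adj[OF a] rcong_gen_zero_adj[OF sg])
  then show "fg_right_congruence (zero_adj_carrier S f) (zero_adj_mult f)
      (rann (zero_adj_carrier S f) (zero_adj_mult f) (Some a))"
    by (rule fg_right_congruenceI[OF semigroup_on_zero_adj[OF sg], rotated 2]) (use X in auto)
qed

lemma fin_right_equated_zero_adj_iff:
  assumes sg: "semigroup_on S f"
  shows "fin_right_equated (zero_adj_carrier S f) (zero_adj_mult f) \<longleftrightarrow>
    fin_right_equated S f \<and>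
    fg_right_congruence (zero_adj_carrier S f) (zero_adj_mult f)
      (zero_adj_carrier S f \<times> zero_adj_carrier S f)"
  unfolding fin_right_equated_def
proof (intro iffI conjI ballI; (elim conjE)?)
  let ?S0 = "zero_adj_carrier S f" and ?f0 = "zero_adj_mult f"
  assume fre0: "\<forall>x\<in>?S0. fg_right_congruence ?S0 ?f0 (rann ?S0 ?f0 x)"
  then show "fg_right_congruence S f (rann S f a)" if "a \<in> S" for a
    using that fg_rann_zero_adj_iff[OF sg that] by simp
  obtain z where z: "z \<in> ?S0" "\<forall>s\<in>?S0. ?f0 z s = z"
    using has_zero_zero_adj unfolding has_zero_def by blast
  with fre0 have "fg_right_congruence ?S0 ?f0 (rann ?S0 ?f0 z)"
    by blast
  then show "fg_right_congruence ?S0 ?f0 (?S0 \<times> ?S0)"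
    using rann_left_zero[of z ?S0 ?f0] z by simp
next
  let ?S0 = "zero_adj_carrier S f" and ?f0 = "zero_adj_mult f"
  fix x assume fre: "\<forall>a\<in>S. fg_right_congruence S f (rann S f a)"
    and univ: "fg_right_congruence ?S0 ?f0 (?S0 \<times> ?S0)" and x: "x \<in> ?S0"
  from x show "fg_right_congruence ?S0 ?f0 (rann ?S0 ?f0 x)"
  proof (cases rule: zero_adj_carrier_cases)
    case 1
    then have "rann ?S0 ?f0 x = ?S0 \<times> ?S0"
      using x by (intro rann_left_zero) simp_all
    with univ show ?thesis by simp
  qed (use fre fg_rann_zero_adj_iff[OF sg] in simp)
qed

lemma fin_gen_right_ideal_zero_adj_iff:
  assumes sg: "semigroup_on S f"
  shows "fin_gen_right_ideal (zero_adj_carrier S f) (zero_adj_mult f) \<longleftrightarrow> fin_gen_right_ideal S f"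
proof
  let ?S0 = "zero_adj_carrier S f" and ?f0 = "zero_adj_mult f"
  assume "fin_gen_right_ideal ?S0 ?f0"
  then obtain U0 where U0: "finite U0" "U0 \<subseteq> ?S0" "?S0 = right_ideal_gen ?S0 ?f0 U0"
    unfolding fin_gen_right_ideal_def by blast
  define U where "U = Some -` U0"
  have U: "finite U" "U \<subseteq> S"
    using U0(1,2) unfolding U_def by (auto intro: finite_vimageI)
  have "S \<subseteq> right_ideal_gen S f U"
  proof
    fix s assume "s \<in> S"
    then have "Some s \<in> right_ideal_gen ?S0 ?f0 U0"
      using U0(3) by simp
    then consider "Some s \<in> U0" | u c where "u \<in> U0" "c \<in> ?S0" "Some s = ?f0 u c"
      unfolding right_ideal_gen_def by blast
    then show "s \<in> right_ideal_gen S f U"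
    proof cases
      case 2
      then show ?thesis
        unfolding U_def right_ideal_gen_def by (cases u; cases c) auto
    qed (auto simp: U_def right_ideal_gen_def)
  qed
  then show "fin_gen_right_ideal S f"
    using U right_ideal_gen_subset[OF sg U(2)] unfolding fin_gen_right_ideal_def by blast
next
  let ?S0 = "zero_adj_carrier S f" and ?f0 = "zero_adj_mult f"
  assume "fin_gen_right_ideal S f"
  then obtain U where U: "finite U" "U \<subseteq> S" "S = right_ideal_gen S f U"
    unfolding fin_gen_right_ideal_def by blast
  define U0 where "U0 = Some ` U \<union> (?S0 - Some ` S)"
  have U0: "finite U0" "U0 \<subseteq> ?S0"
    using U(1,2) unfolding U0_def
    by (auto intro: finite_subset[of _ "{None}"] elim: zero_adj_carrier_cases)
  have "?S0 \<subseteq> right_ideal_gen ?S0 ?f0 U0"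
  proof
    fix x assume "x \<in> ?S0"
    then show "x \<in> right_ideal_gen ?S0 ?f0 U0"
    proof (cases rule: zero_adj_carrier_cases)
      case (2 a)
      with U(3) consider "a \<in> U" | u c where "u \<in> U" "c \<in> S" "a = f u c"
        unfolding right_ideal_gen_def by blast
      then show ?thesis
      proof cases
        case 1
        then show ?thesis
          using 2 generators_subset_right_ideal_gen[of U0] unfolding U0_def by blast
      next
        case (2 u c)
        then have "x = ?f0 (Some u) (Some c)" "Some u \<in> U0" "Some c \<in> ?S0"
          using \<open>x = Some a\<close> unfolding U0_def by auto
        then show ?thesis
          unfolding right_ideal_gen_def by blast
      qed
    qed (use \<open>x \<in> ?S0\<close> in \<open>auto simp: U0_def right_ideal_gen_def\<close>)
  qed
  then show "fin_gen_right_ideal ?S0 ?f0"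
    using U0 right_ideal_gen_subset[OF semigroup_on_zero_adj[OF sg] U0(2)]
    unfolding fin_gen_right_ideal_def by blast
qed

theorem mainTheorem10:
  fixes S :: "'a set" and f :: "'a \<Rightarrow> 'a \<Rightarrow> 'a"
  assumes "semigroup_on S f"
  shows "fin_right_equated (zero_adj_carrier S f) (zero_adj_mult f)
    \<longleftrightarrow> fin_right_equated S f \<and>
        (\<exists>U. finite U \<and> U \<subseteq> S \<and> S = right_ideal_gen S f U)"
proof -
  let ?S0 = "zero_adj_carrier S f" and ?f0 = "zero_adj_mult f"
  have sg0: "semigroup_on ?S0 ?f0"
    using assms by (rule semigroup_on_zero_adj)
  obtain z where z: "z \<in> ?S0" "\<forall>s\<in>?S0. ?f0 z s = z"
    using has_zero_zero_adj unfolding has_zero_def by blast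
  have "fg_right_congruence ?S0 ?f0 (?S0 \<times> ?S0) \<longleftrightarrow> fin_gen_right_ideal ?S0 ?f0"
    using fg_universal_imp_fin_gen_right_ideal[OF sg0]
      fin_gen_right_ideal_imp_fg_universal[OF sg0 z] by blast
  then show ?thesis
    using fin_right_equated_zero_adj_iff[OF assms] fin_gen_right_ideal_zero_adj_iff[OF assms]
    unfolding fin_gen_right_ideal_def by simp
qed

end
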